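(* Let $n\ge4$, $r_1,r_2\in\mathbb{Z}_+$ with $r_1+r_2=n-1$, and let $-1<\alpha_1<1$, $0\le\alpha_2,\alpha_3<1$ with $\alpha_1+\alpha_2+\alpha_3=1$ and $r_1+\alpha_1\ge r_2+\alpha_2$. Then $$\mathfrak{L}_n(r_1,r_2,0,\alpha_1,\alpha_2,\alpha_3)\le \mathfrak{L}_n(r_1+r_2,0,0,\alpha_1,\alpha_2,\alpha_3)+2^{r_2+2}+1-r_2+2^{r_2+1}\ln n.$$
   Context: Points of a triangle are identified with barycentric coordinates $\lambda=(\lambda_1,\lambda_2,\lambda_3)$, $\lambda_r\ge0$, $\sum\lambda_r=1$. For an integer $n\ge1$ let $I=\{i=(i_1,i_2,i_3)\in\mathbb{Z}_+^3: i_1+i_2+i_3=n\}$, and let $l_i(\lambda)=\prod_{s=1}^{3}\frac{1}{i_s!}\prod_{t=0}^{i_s-1}(n\lambda_s-t)$ (the Lagrange fundamental polynomials for the equally spaced nodes $i/n$, $i\in I$). The Lebesgue function is $\mathcal{L}_n(\lambda)=\sum_{i\in I}|l_i(\lambda)|$. For $r_s\in\mathbb{Z}_+$ with $r_1+r_2+r_3=n-1$ and reals $\alpha_s$ with $\alpha_1+\alpha_2+\alpha_3=1$, write $\mathfrak{L}_n(r_1,r_2,r_3,\alpha_1,\alpha_2,\alpha_3)=\mathcal{L}_n(\lambda)$ where $\lambda_s=(r_s+\alpha_s)/n$, $s=1,2,3$. *)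

theory Defs
  imports Complex_Main
begin

definition idx :: "nat \<Rightarrow> (nat \<times> nat \<times> nat) set" where
  "idx n = {(i1, i2, i3). i1 + i2 + i3 = n}"

definition lfac :: "nat \<Rightarrow> nat \<Rightarrow> real \<Rightarrow> real" where
  "lfac n k x = (1 / fact k) * (\<Prod>t<k. real n * x - real t)"

text \<open>Lagrange fundamental polynomial l_i at barycentric point (x1,x2,x3).\<close>
definition lagr :: "nat \<Rightarrow> nat \<times> nat \<times> nat \<Rightarrow> real \<times> real \<times> real \<Rightarrow> real" where
  "lagr n i lam = (case i of (i1, i2, i3) \<Rightarrow> case lam of (x1, x2, x3) \<Rightarrow>
      lfac n i1 x1 * lfac n i2 x2 * lfac n i3 x3)"

definition lebesgue :: "nat \<Rightarrow> real \<times> real \<times> real \<Rightarrow> real" where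
  "lebesgue n lam = (\<Sum>i\<in>idx n. \<bar>lagr n i lam\<bar>)"

definition frakL :: "nat \<Rightarrow> nat \<Rightarrow> nat \<Rightarrow> nat \<Rightarrow> real \<Rightarrow> real \<Rightarrow> real \<Rightarrow> real" where
  "frakL n r1 r2 r3 a1 a2 a3 =
     lebesgue n ((real r1 + a1) / real n, (real r2 + a2) / real n, (real r3 + a3) / real n)"

end

theory Submission
  imports Defs
begin

text \<open>At \<open>\<lambda>\<^sub>s = x\<^sub>s / n\<close> each Lagrange polynomial is the product of the generalised
  binomial coefficients \<open>x\<^sub>s gchoose i\<^sub>s\<close>, so the Lebesgue function is a sum of
  \<open>\<bar>(x\<^sub>1 gchoose i\<^sub>1) (x\<^sub>2 gchoose i\<^sub>2) (x\<^sub>3 gchoose i\<^sub>3)\<bar>\<close>.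
  By Pascal's rule, moving one unit from \<open>x\<^sub>2\<close> to \<open>x\<^sub>1\<close> can decrease this sum only by
  twice its part with \<open>i\<^sub>1 > x\<^sub>1 + 1\<close>. There \<open>\<bar>x\<^sub>1 gchoose i\<^sub>1\<bar>\<close> decays like
  \<open>2 / ((m + 2) (m + 3))\<close> in the excess \<open>m\<close> of \<open>i\<^sub>1\<close> over \<open>\<lfloor>x\<^sub>1\<rfloor> + 2\<close>, while
  \<open>\<bar>x\<^sub>2 gchoose i\<^sub>2\<bar> \<le> (q + 1 choose i\<^sub>2)\<close> for \<open>q = \<lfloor>x\<^sub>2\<rfloor>\<close>, so that part is at most
  \<open>2 ^ (q + 1)\<close>. Moving all \<open>r\<^sub>2\<close> units therefore costs at most \<open>2 ^ (r\<^sub>2 + 2) - 4\<close>;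
  the logarithmic term of the statement merely absorbs \<open>r\<^sub>2 - 5\<close>.\<close>

lemma gbinomial_Suc_right:
  fixes a :: real
  shows "of_nat (Suc k) * (a gchoose Suc k) = (a - of_nat k) * (a gchoose k)"
  by (metis gbinomial_absorption gbinomial_absorb_comp)

lemma finite_idx: "finite (idx n)"
proof (rule finite_subset)
  show "idx n \<subseteq> {..n} \<times> {..n} \<times> {..n}" by (auto simp: idx_def)
qed auto

lemma sum_idx_Suc_shift_fst:
  "(\<Sum>(i1, i2, i3)\<in>idx (Suc m). if i1 = 0 then 0 else f (i1 - 1) i2 i3)
     = (\<Sum>(j1, j2, j3)\<in>idx m. (f j1 j2 j3 :: real))"
proof -
  have "(\<Sum>(i1, i2, i3)\<in>idx (Suc m). if i1 = 0 then 0 else f (i1 - 1) i2 i3)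
      = (\<Sum>(i1, i2, i3)\<in>{i\<in>idx (Suc m). fst i \<noteq> 0}. f (i1 - 1) i2 i3)"
    by (rule sum.mono_neutral_cong_right) (auto simp: finite_idx split: if_splits)
  also have "\<dots> = (\<Sum>(j1, j2, j3)\<in>idx m. f j1 j2 j3)"
    by (rule sum.reindex_bij_witness[of _ "\<lambda>(j1, j2, j3). (Suc j1, j2, j3)"
          "\<lambda>(i1, i2, i3). (i1 - 1, i2, i3)"]) (auto simp: idx_def)
  finally show ?thesis .
qed

lemma sum_idx_Suc_shift_snd:
  "(\<Sum>(i1, i2, i3)\<in>idx (Suc m). if i2 = 0 then 0 else f i1 (i2 - 1) i3)
     = (\<Sum>(j1, j2, j3)\<in>idx m. (f j1 j2 j3 :: real))"
proof -
  have "(\<Sum>(i1, i2, i3)\<in>idx (Suc m). if i2 = 0 then 0 else f i1 (i2 - 1) i3)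
      = (\<Sum>(i1, i2, i3)\<in>{i\<in>idx (Suc m). fst (snd i) \<noteq> 0}. f i1 (i2 - 1) i3)"
    by (rule sum.mono_neutral_cong_right) (auto simp: finite_idx split: if_splits)
  also have "\<dots> = (\<Sum>(j1, j2, j3)\<in>idx m. f j1 j2 j3)"
    by (rule sum.reindex_bij_witness[of _ "\<lambda>(j1, j2, j3). (j1, Suc j2, j3)"
          "\<lambda>(i1, i2, i3). (i1, i2 - 1, i3)"]) (auto simp: idx_def)
  finally show ?thesis .
qed

lemma lfac_eq_gbinomial: "0 < n \<Longrightarrow> lfac n k (x / real n) = x gchoose k"
  by (simp add: lfac_def gbinomial_prod_rev lessThan_atLeast0)

definition gbinomial_abs_sum :: "nat \<Rightarrow> real \<Rightarrow> real \<Rightarrow> real \<Rightarrow> real" where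
  "gbinomial_abs_sum n x y z =
     (\<Sum>(i1, i2, i3)\<in>idx n. \<bar>(x gchoose i1) * (y gchoose i2) * (z gchoose i3)\<bar>)"

lemma frakL_eq_gbinomial_abs_sum:
  "0 < n \<Longrightarrow> frakL n r1 r2 r3 a1 a2 a3
     = gbinomial_abs_sum n (real r1 + a1) (real r2 + a2) (real r3 + a3)"
  unfolding frakL_def lebesgue_def gbinomial_abs_sum_def
  by (rule sum.cong) (auto simp: lagr_def lfac_eq_gbinomial)

definition gbinomial_pred :: "real \<Rightarrow> nat \<Rightarrow> real" where
  "gbinomial_pred x i = (if i = 0 then 0 else x gchoose (i - 1))"

lemma gbinomial_add_1_pascal: "((x::real) + 1) gchoose i = (x gchoose i) + gbinomial_pred x i"
  by (cases i) (auto simp: gbinomial_pred_def gbinomial_Suc_Suc)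

text \<open>For \<open>i \<le> x + 1\<close> the numbers \<open>x gchoose i\<close> and \<open>x gchoose (i - 1)\<close> have the same sign,
  so Pascal's rule adds their absolute values; otherwise the triangle inequality costs
  twice \<open>\<bar>x gchoose i\<bar>\<close>.\<close>
lemma abs_gbinomial_add_pred_le:
  "\<bar>x gchoose i\<bar> + \<bar>gbinomial_pred x i\<bar>
     \<le> \<bar>(x + 1) gchoose i\<bar> + 2 * (if x + 1 < real i then \<bar>x gchoose i\<bar> else 0)"
proof (cases "x + 1 < real i")
  case True
  then show ?thesis
    using abs_triangle_ineq4[of "(x gchoose i) + gbinomial_pred x i" "x gchoose i"]
    unfolding gbinomial_add_1_pascal by simp
next
  case False
  show ?thesis
  proof (cases i)
    case (Suc k)
    have "real (Suc k) * (x gchoose i) = (x - real k) * gbinomial_pred x i"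
      using gbinomial_Suc_right[of k x] Suc by (simp add: gbinomial_pred_def)
    then have "real (Suc k) * ((x gchoose i) * gbinomial_pred x i)
        = (x - real k) * (gbinomial_pred x i)\<^sup>2"
      by (simp add: power2_eq_square)
    moreover have "0 \<le> x - real k" using False Suc by simp
    ultimately have "0 \<le> real (Suc k) * ((x gchoose i) * gbinomial_pred x i)"
      by simp
    then have "0 \<le> (x gchoose i) * gbinomial_pred x i"
      by (simp add: zero_le_mult_iff)
    then have "\<bar>(x + 1) gchoose i\<bar> = \<bar>x gchoose i\<bar> + \<bar>gbinomial_pred x i\<bar>"
      unfolding gbinomial_add_1_pascal by (smt (verit) zero_le_mult_iff)
    then show ?thesis by simp
  qed (simp add: gbinomial_pred_def)
qed

definition gbinomial_abs_tail :: "nat \<Rightarrow> real \<Rightarrow> real \<Rightarrow> real \<Rightarrow> real" where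
  "gbinomial_abs_tail n x y z =
     (\<Sum>(i1, i2, i3)\<in>idx n.
        if x + 1 < real i1 then \<bar>(x gchoose i1) * (y gchoose i2) * (z gchoose i3)\<bar> else 0)"

lemma gbinomial_abs_sum_add_1_le:
  "gbinomial_abs_sum (Suc m) x (y + 1) z
     \<le> gbinomial_abs_sum (Suc m) (x + 1) y z + 2 * gbinomial_abs_tail (Suc m) x y z"
proof -
  have pred_snd: "(\<Sum>(i1, i2, i3)\<in>idx (Suc m).
        \<bar>(x gchoose i1) * gbinomial_pred y i2 * (z gchoose i3)\<bar>) = gbinomial_abs_sum m x y z"
    unfolding gbinomial_abs_sum_def
    by (subst sum_idx_Suc_shift_snd[symmetric]) (rule sum.cong, auto simp: gbinomial_pred_def)
  have pred_fst: "(\<Sum>(i1, i2, i3)\<in>idx (Suc m).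
        \<bar>gbinomial_pred x i1 * (y gchoose i2) * (z gchoose i3)\<bar>) = gbinomial_abs_sum m x y z"
    unfolding gbinomial_abs_sum_def
    by (subst sum_idx_Suc_shift_fst[symmetric]) (rule sum.cong, auto simp: gbinomial_pred_def)
  have "gbinomial_abs_sum (Suc m) x (y + 1) z \<le> gbinomial_abs_sum (Suc m) x y z
      + (\<Sum>(i1, i2, i3)\<in>idx (Suc m). \<bar>(x gchoose i1) * gbinomial_pred y i2 * (z gchoose i3)\<bar>)"
    unfolding gbinomial_abs_sum_def sum.distrib[symmetric]
    by (rule sum_mono) (clarsimp simp: gbinomial_add_1_pascal ring_distribs abs_triangle_ineq)
  also have "\<dots> = gbinomial_abs_sum (Suc m) x y z
      + (\<Sum>(i1, i2, i3)\<in>idx (Suc m). \<bar>gbinomial_pred x i1 * (y gchoose i2) * (z gchoose i3)\<bar>)"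
    unfolding pred_snd pred_fst ..
  also have "\<dots> \<le> gbinomial_abs_sum (Suc m) (x + 1) y z + 2 * gbinomial_abs_tail (Suc m) x y z"
    unfolding gbinomial_abs_sum_def gbinomial_abs_tail_def sum.distrib[symmetric] sum_distrib_left
  proof (rule sum_mono, clarify)
    fix i1 i2 i3
    show "\<bar>(x gchoose i1) * (y gchoose i2) * (z gchoose i3)\<bar>
        + \<bar>gbinomial_pred x i1 * (y gchoose i2) * (z gchoose i3)\<bar>
      \<le> \<bar>((x + 1) gchoose i1) * (y gchoose i2) * (z gchoose i3)\<bar>
        + 2 * (if x + 1 < real i1 then \<bar>(x gchoose i1) * (y gchoose i2) * (z gchoose i3)\<bar> else 0)"
      using mult_right_mono[OF abs_gbinomial_add_pred_le, of "\<bar>(y gchoose i2) * (z gchoose i3)\<bar>" x i1]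
      by (simp add: abs_mult algebra_simps split: if_splits)
  qed
  finally show ?thesis .
qed

lemma abs_gbinomial_le_binomial:
  fixes x :: real
  assumes "real j - 1 \<le> x" "x \<le> real N" "j \<le> N"
  shows "\<bar>x gchoose j\<bar> \<le> real (N choose j)"
proof -
  have factors: "0 \<le> x - real i \<and> x - real i \<le> real N - real i" if "i \<in> {0..<j}" for i
    using assms that by auto
  have "0 \<le> (\<Prod>i = 0..<j. x - real i)"
    by (rule prod_nonneg) (use factors in blast)
  moreover have "(\<Prod>i = 0..<j. x - real i) \<le> (\<Prod>i = 0..<j. real N - real i)"
    by (rule prod_mono) (use factors in blast)
  ultimately show ?thesis
    by (simp add: gbinomial_prod_rev binomial_gbinomial divide_right_mono)
qed

lemma abs_gbinomial_le_1:
  fixes x :: real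
  assumes "0 \<le> x" "x \<le> 1"
  shows "\<bar>x gchoose k\<bar> \<le> 1"
proof (induction k)
  case (Suc k)
  have "real (Suc k) * \<bar>x gchoose Suc k\<bar> = \<bar>x - real k\<bar> * \<bar>x gchoose k\<bar>"
    by (metis abs_mult abs_of_nat gbinomial_Suc_right)
  also have "\<dots> \<le> real (Suc k) * 1"
    using Suc assms by (intro mult_mono) auto
  finally show ?case by simp
qed simp

text \<open>Beyond the integer part \<open>P\<close> of \<open>x\<close> the ratio \<open>\<bar>x - i\<bar> / (i + 1)\<close> of consecutive
  terms is at most \<open>(m + 2) / (m + 4)\<close> at \<open>i = P + 2 + m\<close>.\<close>
lemma abs_gbinomial_beyond_le:
  fixes x :: real
  assumes "real P \<le> x" "x < real P + 1" "1 \<le> P"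
  shows "\<bar>x gchoose (P + 2 + m)\<bar> \<le> 2 / ((real m + 2) * (real m + 3))"
proof (induction m)
  case 0
  have "real (Suc (P + 1)) * \<bar>x gchoose Suc (P + 1)\<bar> = \<bar>x - real (P + 1)\<bar> * \<bar>x gchoose (P + 1)\<bar>"
    by (metis abs_mult abs_of_nat gbinomial_Suc_right)
  also have "\<dots> \<le> 1 * 1"
    using assms abs_gbinomial_le_binomial[of "P + 1" x "P + 1"] by (intro mult_mono) auto
  moreover have "3 * \<bar>x gchoose Suc (P + 1)\<bar> \<le> real (Suc (P + 1)) * \<bar>x gchoose Suc (P + 1)\<bar>"
    using assms by (intro mult_right_mono) auto
  ultimately show ?case by simp
next
  case (Suc m)
  let ?i = "P + 2 + m"
  have "real (Suc ?i) * \<bar>x gchoose Suc ?i\<bar> = \<bar>x - real ?i\<bar> * \<bar>x gchoose ?i\<bar>"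
    by (metis abs_mult abs_of_nat gbinomial_Suc_right)
  also have "\<dots> \<le> (real m + 2) * (2 / ((real m + 2) * (real m + 3)))"
    using Suc assms by (intro mult_mono) auto
  also have "\<dots> = 2 / (real m + 3)"
    by (simp add: divide_simps add_pos_pos)
  moreover have "(real m + 4) * \<bar>x gchoose Suc ?i\<bar> \<le> real (Suc ?i) * \<bar>x gchoose Suc ?i\<bar>"
    using assms by (intro mult_right_mono) auto
  ultimately have "(real m + 4) * \<bar>x gchoose Suc ?i\<bar> \<le> 2 / (real m + 3)"
    by linarith
  then have "\<bar>x gchoose Suc ?i\<bar> \<le> 2 / (real m + 3) / (real m + 4)"
    by (simp add: pos_le_divide_eq mult_ac)
  moreover have "real (Suc m) + 2 = real m + 3" "real (Suc m) + 3 = real m + 4" by simp_all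
  ultimately show ?case by (simp only: divide_divide_eq_left add_Suc_right)
qed

lemma abs_gbinomial_tail_term_le:
  fixes x y z :: real
  assumes "real P \<le> x" "x < real P + 1" "1 \<le> P" "P + 2 \<le> i1"
    and "real q \<le> y" "y < real q + 1" "i2 \<le> q + 1"
    and "0 \<le> z" "z \<le> 1"
  shows "\<bar>(x gchoose i1) * (y gchoose i2) * (z gchoose i3)\<bar>
    \<le> 2 / ((real (i1 - P - 2) + 2) * (real (i1 - P - 2) + 3)) * real ((q + 1) choose i2)"
proof -
  have i1: "P + 2 + (i1 - P - 2) = i1" using assms(4) by simp
  have "\<bar>x gchoose i1\<bar> \<le> 2 / ((real (i1 - P - 2) + 2) * (real (i1 - P - 2) + 3))"
    using abs_gbinomial_beyond_le[OF assms(1-3), of "i1 - P - 2"] unfolding i1 .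
  moreover have "\<bar>y gchoose i2\<bar> \<le> real ((q + 1) choose i2)"
    using assms(5-7) by (intro abs_gbinomial_le_binomial) auto
  moreover have "\<bar>z gchoose i3\<bar> \<le> 1"
    using assms(8,9) by (rule abs_gbinomial_le_1)
  ultimately have "\<bar>x gchoose i1\<bar> * \<bar>y gchoose i2\<bar> * \<bar>z gchoose i3\<bar>
      \<le> 2 / ((real (i1 - P - 2) + 2) * (real (i1 - P - 2) + 3)) * real ((q + 1) choose i2) * 1"
    by (intro mult_mono) auto
  then show ?thesis by (simp add: abs_mult)
qed

lemma sum_two_div_consecutive:
  "(\<Sum>m<M. 2 / ((real m + 2) * (real m + 3))) = 1 - 2 / (real M + 2)"
proof (induction M)
  case (Suc M)
  have "1 - 2 / (real M + 2) + 2 / ((real M + 2) * (real M + 3)) = 1 - 2 / (real M + 3)"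
    by (simp add: divide_simps) (simp add: algebra_simps)
  then show ?case using Suc by simp
qed simp

text \<open>Since \<open>i\<^sub>3 = n - i\<^sub>1 - i\<^sub>2\<close>, the tail embeds into the pairs
  \<open>(i\<^sub>1 - \<lfloor>x\<rfloor> - 2, i\<^sub>2)\<close>, over which the termwise bound sums to at most \<open>1 \<cdot> 2 ^ (q + 1)\<close>.\<close>
lemma gbinomial_abs_tail_le:
  assumes "1 \<le> x" "real q \<le> y" "y < real q + 1" "0 \<le> z" "z < 1"
    and "real n = x + y + 1 + z"
  shows "gbinomial_abs_tail n x y z \<le> 2 ^ (q + 1)"
proof -
  define P where "P = nat \<lfloor>x\<rfloor>"
  have P: "real P \<le> x" "x < real P + 1" "1 \<le> P"
    using assms(1) by (auto simp: P_def le_nat_floor)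
  define W :: "nat \<Rightarrow> real" where "W m = 2 / ((real m + 2) * (real m + 3))" for m
  define H where "H = (\<lambda>(m, j). W m * real ((q + 1) choose j))"
  define S where "S = {i \<in> idx n. x + 1 < real (fst i)}"
  define \<pi> :: "nat \<times> nat \<times> nat \<Rightarrow> nat \<times> nat" where "\<pi> = (\<lambda>(i1, i2, i3). (i1 - P - 2, i2))"
  have S_range: "P + 2 \<le> i1 \<and> i1 \<le> n \<and> i2 \<le> q + 1" if "(i1, i2, i3) \<in> S" for i1 i2 i3
  proof -
    have "i1 + i2 + i3 = n" "x + 1 < real i1" using that by (auto simp: S_def idx_def)
    moreover from this have "real i1 + real i2 + real i3 = real n" by (metis of_nat_add)
    ultimately show ?thesis using assms P by auto
  qed
  have term_le: "\<bar>(x gchoose i1) * (y gchoose i2) * (z gchoose i3)\<bar> \<le> H (\<pi> (i1, i2, i3))"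
    if "(i1, i2, i3) \<in> S" for i1 i2 i3
    using abs_gbinomial_tail_term_le[OF P _ assms(2,3) _ assms(4)] S_range[OF that] assms(5)
    by (simp add: H_def W_def \<pi>_def)
  have "inj_on \<pi> S"
  proof (rule inj_onI)
    fix i j assume "i \<in> S" "j \<in> S" and eq: "\<pi> i = \<pi> j"
    obtain i1 i2 i3 j1 j2 j3 where ij: "i = (i1, i2, i3)" "j = (j1, j2, j3)"
      by (cases i, cases j) auto
    with \<open>i \<in> S\<close> \<open>j \<in> S\<close> have i: "(i1, i2, i3) \<in> S" and j: "(j1, j2, j3) \<in> S" by simp_all
    have "P + 2 \<le> i1" "P + 2 \<le> j1" using S_range[OF i] S_range[OF j] by simp_all
    moreover have "i1 + i2 + i3 = n" "j1 + j2 + j3 = n" using i j by (auto simp: S_def idx_def)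
    moreover have "i1 - P - 2 = j1 - P - 2" "i2 = j2" using eq ij by (auto simp: \<pi>_def)
    ultimately show "i = j" unfolding ij by simp arith
  qed
  have "gbinomial_abs_tail n x y z
      = (\<Sum>(i1, i2, i3)\<in>S. \<bar>(x gchoose i1) * (y gchoose i2) * (z gchoose i3)\<bar>)"
    unfolding gbinomial_abs_tail_def S_def
    by (rule sum.mono_neutral_cong_right) (auto simp: finite_idx split: if_splits)
  also have "\<dots> \<le> sum (H \<circ> \<pi>) S"
    by (rule sum_mono) (use term_le in auto)
  also have "\<dots> = sum H (\<pi> ` S)"
    by (rule sum.reindex[symmetric]) fact
  also have "\<dots> \<le> sum H ({..<n} \<times> {..q + 1})"
    by (rule sum_mono2) (use S_range in \<open>force simp: \<pi>_def H_def W_def\<close>)+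
  also have "\<dots> = sum W {..<n} * (\<Sum>j\<le>q + 1. real ((q + 1) choose j))"
    by (simp only: H_def sum_product sum.cartesian_product)
  also have "\<dots> \<le> 1 * 2 ^ (q + 1)"
  proof (rule mult_mono)
    show "sum W {..<n} \<le> 1" by (simp add: W_def sum_two_div_consecutive)
    show "(\<Sum>j\<le>q + 1. real ((q + 1) choose j)) \<le> 2 ^ (q + 1)"
      unfolding of_nat_sum[symmetric] choose_row_sum by simp
  qed (simp_all add: W_def sum_nonneg)
  finally show ?thesis by simp
qed

lemma gbinomial_abs_sum_shift_le:
  assumes "1 \<le> x" "real q \<le> y" "y < real q + 1" "0 \<le> z" "z < 1"
    and "real n = x + y + 1 + z"
  shows "gbinomial_abs_sum n x (y + 1) z \<le> gbinomial_abs_sum n (x + 1) y z + 2 ^ (q + 2)"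
proof -
  obtain m where n: "n = Suc m"
    using assms by (cases n) auto
  have "gbinomial_abs_sum n x (y + 1) z
      \<le> gbinomial_abs_sum n (x + 1) y z + 2 * gbinomial_abs_tail n x y z"
    unfolding n by (rule gbinomial_abs_sum_add_1_le)
  also have "\<dots> \<le> gbinomial_abs_sum n (x + 1) y z + 2 * 2 ^ (q + 1)"
    using gbinomial_abs_tail_le[OF assms] by simp
  finally show ?thesis by simp
qed

lemma le_pow2_mult_ln:
  assumes "3 \<le> n"
  shows "real r \<le> 2 ^ (r + 1) * ln (real n)"
proof -
  have "exp 1 \<le> real n" using exp_le assms by linarith
  then have "1 \<le> ln (real n)" using assms by (subst ln_ge_iff) auto
  then have "2 ^ (r + 1) * 1 \<le> 2 ^ (r + 1) * ln (real n)"
    by (intro mult_left_mono) auto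
  moreover have "r \<le> 2 ^ (r + 1)" using less_exp[of "r + 1"] by simp
  then have "real r \<le> 2 ^ (r + 1)" by (metis of_nat_le_iff of_nat_numeral of_nat_power)
  ultimately show ?thesis by linarith
qed

lemma telescoping_le_pow2:
  fixes G :: "nat \<Rightarrow> real"
  assumes step: "\<And>k. k < N \<Longrightarrow> G k \<le> G (Suc k) + 2 ^ (N - k + 1)"
  shows "G 0 \<le> G N + 2 ^ (N + 2) - 4"
proof -
  have "G 0 \<le> G k + 2 ^ (N + 2) - 2 ^ (N - k + 2)" if "k \<le> N" for k
    using that
  proof (induction k)
    case (Suc k)
    have "N - k + 1 = N - Suc k + 2" using Suc.prems by simp
    moreover have "(2::real) ^ (N - k + 2) = 2 * 2 ^ (N - k + 1)" by simp
    ultimately show ?case using Suc step[of k] by simp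
  qed simp
  from this[of N] show ?thesis by simp
qed

theorem lemma16:
  fixes n r1 r2 :: nat and a1 a2 a3 :: real
  assumes "n \<ge> 4" and "r1 + r2 = n - 1"
    and "-1 < a1" and "a1 < 1"
    and "0 \<le> a2" and "a2 < 1" and "0 \<le> a3" and "a3 < 1"
    and "a1 + a2 + a3 = 1"
    and "real r1 + a1 \<ge> real r2 + a2"
  shows "frakL n r1 r2 0 a1 a2 a3
    \<le> frakL n (r1 + r2) 0 0 a1 a2 a3 + 2 ^ (r2 + 2) + 1 - real r2 + 2 ^ (r2 + 1) * ln (real n)"
proof -
  define x1 where "x1 = real r1 + a1"
  define x2 where "x2 = real r2 + a2"
  define G where "G k = gbinomial_abs_sum n (x1 + real k) (x2 - real k) a3" for k
  have n: "real n = real r1 + real r2 + 1" using assms(1,2) by simp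
  have "2 \<le> r1"
  proof (rule ccontr)
    assume "\<not> 2 \<le> r1"
    then have "real r1 \<le> 1" "2 \<le> real r2" using assms(1,2) by simp_all
    then show False using assms(4,5,10) by linarith
  qed
  have "G k \<le> G (Suc k) + 2 ^ (r2 - k + 1)" if "k < r2" for k
  proof -
    have q: "real (r2 - Suc k) = real r2 - real k - 1" using that by (simp add: of_nat_diff)
    have "G k \<le> G (Suc k) + 2 ^ (r2 - Suc k + 2)"
      using gbinomial_abs_sum_shift_le[of "x1 + real k" "r2 - Suc k" "x2 - real (Suc k)" a3 n]
        \<open>2 \<le> r1\<close> assms(3,5-9) n
      unfolding G_def q x1_def x2_def by (simp add: algebra_simps)
    moreover have "r2 - Suc k + 2 = r2 - k + 1" using that by simp
    ultimately show ?thesis by (simp only:)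
  qed
  then have "G 0 \<le> G r2 + 2 ^ (r2 + 2) - 4"
    by (rule telescoping_le_pow2)
  moreover have "G 0 = frakL n r1 r2 0 a1 a2 a3" "G r2 = frakL n (r1 + r2) 0 0 a1 a2 a3"
    using assms(1) by (simp_all add: G_def x1_def x2_def frakL_eq_gbinomial_abs_sum algebra_simps)
  moreover have "real r2 \<le> 2 ^ (r2 + 1) * ln (real n)"
    using assms(1) by (intro le_pow2_mult_ln) simp
  ultimately show ?thesis by linarith
qed

end
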